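(* Let $(\Lambda,d)$ be a $k$-graph. Suppose $x,y\in\Lambda^{\le\infty}$ and $p,q\in\mathbb{N}^k$ satisfy $p\le d(x)$, $q\le d(y)$ and $\sigma^p x=\sigma^q y$. Then for all $a,b\in\mathbb{N}^k$ with $a\le b$ and $b+p\not\le d(x)$, we have $b+q\not\le d(y)$ and $(x;(a+p,b+p))\sim(y;(a+q,b+q))$, i.e. $[x;(a+p,b+p)]=[y;(a+q,b+q)]$.
   Context: A $k$-graph $(\Lambda,d)$ is a countable category with a degree functor $d:\Lambda\to\mathbb{N}^k$ satisfying the unique factorization property (if $d(\lambda)=m+n$ there are unique $\mu,\nu$ with $\lambda=\mu\nu$, $d(\mu)=m$, $d(\nu)=n$); $\Lambda^0$ is the vertex set (identity morphisms), $r,s$ range and source, $v\Lambda^n=\{\lambda:r(\lambda)=v,d(\lambda)=n\}$; $e_i$ standard basis, $\le$ coordinatewise, $\vee,\wedge$ coordinatewise max/min (also on $(\mathbb{N}\cup\{\infty\})^k$). For $m\in(\mathbb{N}\cup\{\infty\})^k$, $\Omega_{k,m}$ is the $k$-graph with objects $\{p\in\mathbb{N}^k:p\le m\}$, morphisms pairs $(p,q)$ with $p\le q\le m$, $r(p,q)=p$, $s(p,q)=q$, $d(p,q)=q-p$, $(p,q)(q,u)=(p,u)$. A graph morphism $x:\Omega_{k,m}\to\Lambda$ is a degree-preserving functor; write $d(x)=m$, $x(a,b)$ for $x((a,b))$ and $x(a)=x(a,a)$. It is a boundary path if there is $n_x\in\mathbb{N}^k$, $n_x\le d(x)$, such that whenever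 $p\in\mathbb{N}^k$, $n_x\le p\le d(x)$ and $p_i=d(x)_i$, we have $x(p)\Lambda^{e_i}=\emptyset$; $\Lambda^{\le\infty}$ is the set of boundary paths. For $p\in\mathbb{N}^k$, $p\le d(x)$, $\sigma^p x:\Omega_{k,d(x)-p}\to\Lambda$ is $\sigma^px(a,b)=x(a+p,b+p)$. Let $P_\Lambda=\{(x;(m,n)):x\in\Lambda^{\le\infty},\ m,n\in\mathbb{N}^k,\ m\le n,\ n\not\le d(x)\}$, and define $(x;(m,n))\sim(y;(p,q))$ iff (P1) $x(m\wedge d(x),n\wedge d(x))=y(p\wedge d(y),q\wedge d(y))$, (P2) $m-m\wedge d(x)=p-p\wedge d(y)$, (P3) $n-m=q-p$. This is an equivalence relation; $[x;(m,n)]$ denotes the class of $(x;(m,n))$. *)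

theory Defs
  imports Main "HOL-Library.Function_Algebras" "HOL-Library.Extended_Nat" "HOL-Library.Countable_Set"
begin

text \<open>Degrees in N^k are functions 'k => nat for a finite index type 'k (k = CARD('k)),
  with pointwise order, addition (Function_Algebras) and meet (inf).
  Extended degrees in (N u {oo})^k are functions 'k => enat.\<close>

record ('a, 'k) kgraph =
  Mor :: "'a set"
  Obj :: "'a set"
  rng :: "'a \<Rightarrow> 'a"
  src :: "'a \<Rightarrow> 'a"
  cmp :: "'a \<Rightarrow> 'a \<Rightarrow> 'a"
  deg :: "'a \<Rightarrow> 'k \<Rightarrow> nat"

text \<open>A k-graph: a countable category (objects = identity morphisms) with a degree functor
  to N^k satisfying unique factorisation.\<close>
definition is_kgraph :: "('a, 'k::finite) kgraph \<Rightarrow> bool" where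
  "is_kgraph L \<longleftrightarrow>
     countable (Mor L) \<and> Obj L \<subseteq> Mor L \<and>
     (\<forall>l\<in>Mor L. rng L l \<in> Obj L \<and> src L l \<in> Obj L) \<and>
     (\<forall>v\<in>Obj L. rng L v = v \<and> src L v = v) \<and>
     (\<forall>l\<in>Mor L. cmp L (rng L l) l = l \<and> cmp L l (src L l) = l) \<and>
     (\<forall>m\<in>Mor L. \<forall>n\<in>Mor L. src L m = rng L n \<longrightarrow>
         cmp L m n \<in> Mor L \<and> rng L (cmp L m n) = rng L m \<and> src L (cmp L m n) = src L n) \<and>
     (\<forall>l\<in>Mor L. \<forall>m\<in>Mor L. \<forall>n\<in>Mor L. src L l = rng L m \<longrightarrow> src L m = rng L n \<longrightarrow>
         cmp L (cmp L l m) n = cmp L l (cmp L m n)) \<and>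
     (\<forall>m\<in>Mor L. \<forall>n\<in>Mor L. src L m = rng L n \<longrightarrow> deg L (cmp L m n) = deg L m + deg L n) \<and>
     (\<forall>v\<in>Obj L. deg L v = 0) \<and>
     (\<forall>l\<in>Mor L. \<forall>m n. deg L l = m + n \<longrightarrow>
         (\<exists>!(mu, nu). mu \<in> Mor L \<and> nu \<in> Mor L \<and> src L mu = rng L nu \<and>
             l = cmp L mu nu \<and> deg L mu = m \<and> deg L nu = n))"

definition fle :: "('k \<Rightarrow> nat) \<Rightarrow> ('k \<Rightarrow> enat) \<Rightarrow> bool" where
  "fle p m \<longleftrightarrow> (\<forall>i. enat (p i) \<le> m i)"

definition fmeet :: "('k \<Rightarrow> nat) \<Rightarrow> ('k \<Rightarrow> enat) \<Rightarrow> ('k \<Rightarrow> nat)" where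
  "fmeet p m = (\<lambda>i. if enat (p i) \<le> m i then p i else the_enat (m i))"

definition unitv :: "'k \<Rightarrow> ('k \<Rightarrow> nat)" where
  "unitv i = (\<lambda>j. if j = i then 1 else 0)"

text \<open>A path (graph morphism from Omega_{k,m}) is a pair (m, x) with x(a,b) the image of (a,b).\<close>
type_synonym ('a, 'k) kpath = "('k \<Rightarrow> enat) \<times> (('k \<Rightarrow> nat) \<times> ('k \<Rightarrow> nat) \<Rightarrow> 'a)"

definition pdeg :: "('a, 'k) kpath \<Rightarrow> 'k \<Rightarrow> enat" where
  "pdeg x = fst x"

definition pval :: "('a, 'k) kpath \<Rightarrow> ('k \<Rightarrow> nat) \<Rightarrow> ('k \<Rightarrow> nat) \<Rightarrow> 'a" where
  "pval x a b = snd x (a, b)"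

definition is_graph_morphism :: "('a, 'k::finite) kgraph \<Rightarrow> ('a, 'k) kpath \<Rightarrow> bool" where
  "is_graph_morphism L x \<longleftrightarrow>
     (\<forall>a b. a \<le> b \<and> fle b (pdeg x) \<longrightarrow>
        pval x a b \<in> Mor L \<and> deg L (pval x a b) = b - a \<and>
        rng L (pval x a b) = pval x a a \<and> src L (pval x a b) = pval x b b) \<and>
     (\<forall>a. fle a (pdeg x) \<longrightarrow> pval x a a \<in> Obj L) \<and>
     (\<forall>a b c. a \<le> b \<and> b \<le> c \<and> fle c (pdeg x) \<longrightarrow>
        cmp L (pval x a b) (pval x b c) = pval x a c)"

definition boundary_paths :: "('a, 'k::finite) kgraph \<Rightarrow> ('a, 'k) kpath set" where
  "boundary_paths L = {x. is_graph_morphism L x \<and>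
     (\<exists>nx. fle nx (pdeg x) \<and>
        (\<forall>p. nx \<le> p \<and> fle p (pdeg x) \<longrightarrow>
           (\<forall>i. enat (p i) = pdeg x i \<longrightarrow>
              \<not> (\<exists>l\<in>Mor L. rng L l = pval x p p \<and> deg L l = unitv i))))}"

text \<open>The shift sigma^p x (values outside the domain are fixed to undefined, so that equality
  of shifts is equality of graph morphisms Omega_{k,d(x)-p} -> Lambda).\<close>
definition shift :: "('k \<Rightarrow> nat) \<Rightarrow> ('a, 'k) kpath \<Rightarrow> ('a, 'k) kpath" where
  "shift p x = ((\<lambda>i. pdeg x i - enat (p i)),
     (\<lambda>(a, b). if a \<le> b \<and> (\<forall>i. enat (b i) \<le> pdeg x i - enat (p i))
               then pval x (a + p) (b + p) else undefined))"

definition P_Lambda :: "('a, 'k::finite) kgraph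
    \<Rightarrow> (('a, 'k) kpath \<times> ('k \<Rightarrow> nat) \<times> ('k \<Rightarrow> nat)) set" where
  "P_Lambda L = {(x, m, n). x \<in> boundary_paths L \<and> m \<le> n \<and> \<not> fle n (pdeg x)}"

definition psim :: "('a, 'k::finite) kgraph
    \<Rightarrow> (('a, 'k) kpath \<times> ('k \<Rightarrow> nat) \<times> ('k \<Rightarrow> nat))
    \<Rightarrow> (('a, 'k) kpath \<times> ('k \<Rightarrow> nat) \<times> ('k \<Rightarrow> nat)) \<Rightarrow> bool" where
  "psim L u w \<longleftrightarrow> u \<in> P_Lambda L \<and> w \<in> P_Lambda L \<and>
     (case u of (x, m, n) \<Rightarrow> case w of (y, p, q) \<Rightarrow>
        pval x (fmeet m (pdeg x)) (fmeet n (pdeg x)) = pval y (fmeet p (pdeg y)) (fmeet q (pdeg y)) \<and>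
        m - fmeet m (pdeg x) = p - fmeet p (pdeg y) \<and>
        n - m = q - p)"

end

theory Submission
  imports Defs
begin

text \<open>The data (P1)--(P3) of a triple (x; (a + p, b + p)) depend only on the shifted path
  \<open>\<sigma>\<^sup>p x\<close> and on (a, b): degrees, meets and segments of x beyond p are those of \<open>\<sigma>\<^sup>p x\<close>
  translated by p. Hence equal shifts give equal data. No k-graph axiom is needed.\<close>

lemma pdeg_shift: "pdeg (shift p x) = (\<lambda>i. pdeg x i - enat (p i))"
  by (simp add: shift_def pdeg_def)

lemma pval_shift:
  assumes "a \<le> b" and "fle b (pdeg (shift p x))"
  shows "pval (shift p x) a b = pval x (a + p) (b + p)"
  using assms by (simp add: shift_def pval_def pdeg_def fle_def)

lemma fle_add_iff_fle_shift:
  assumes "fle p (pdeg x)"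
  shows "fle (b + p) (pdeg x) \<longleftrightarrow> fle b (pdeg (shift p x))"
proof -
  have "enat (b i + p i) \<le> pdeg x i \<longleftrightarrow> enat (b i) \<le> pdeg x i - enat (p i)" for i
  proof -
    have "enat (p i) \<le> pdeg x i" using assms by (simp add: fle_def)
    then show ?thesis by (cases "pdeg x i") auto
  qed
  then show ?thesis by (simp add: fle_def pdeg_shift)
qed

lemma fmeet_add_eq_fmeet_shift:
  assumes "fle p (pdeg x)"
  shows "fmeet (a + p) (pdeg x) = fmeet a (pdeg (shift p x)) + p"
proof
  fix i
  have "enat (p i) \<le> pdeg x i" using assms by (simp add: fle_def)
  then show "fmeet (a + p) (pdeg x) i = (fmeet a (pdeg (shift p x)) + p) i"
    by (cases "pdeg x i") (auto simp: fmeet_def pdeg_shift)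
qed

lemma fmeet_mono:
  assumes "a \<le> b"
  shows "fmeet a D \<le> fmeet b D"
proof (rule le_funI)
  fix i
  have "a i \<le> b i" using assms by (simp add: le_fun_def)
  then show "fmeet a D i \<le> fmeet b D i"
    by (cases "D i") (auto simp: fmeet_def)
qed

lemma fle_fmeet: "fle (fmeet b D) D"
  unfolding fle_def
proof
  fix i
  show "enat (fmeet b D i) \<le> D i"
    by (cases "D i") (auto simp: fmeet_def)
qed

lemma pval_fmeet_add_eq_shift:
  assumes "fle p (pdeg x)" and "a \<le> b"
  shows "pval x (fmeet (a + p) (pdeg x)) (fmeet (b + p) (pdeg x))
       = pval (shift p x) (fmeet a (pdeg (shift p x))) (fmeet b (pdeg (shift p x)))"
  using assms by (simp add: fmeet_add_eq_fmeet_shift pval_shift fmeet_mono fle_fmeet)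

lemma add_minus_fmeet_add_eq_shift:
  assumes "fle p (pdeg x)"
  shows "(a + p) - fmeet (a + p) (pdeg x) = a - fmeet a (pdeg (shift p x))"
  using assms by (simp add: fmeet_add_eq_fmeet_shift fun_eq_iff)

theorem proposition3p10:
  fixes L :: "('a, 'k::finite) kgraph"
    and x y :: "('a, 'k) kpath"
    and p q :: "'k \<Rightarrow> nat"
  assumes "is_kgraph L"
    and "x \<in> boundary_paths L" and "y \<in> boundary_paths L"
    and "fle p (pdeg x)" and "fle q (pdeg y)"
    and "shift p x = shift q y"
  shows "\<forall>a b :: 'k \<Rightarrow> nat. a \<le> b \<and> \<not> fle (b + p) (pdeg x) \<longrightarrow>
           \<not> fle (b + q) (pdeg y) \<and> psim L (x, a + p, b + p) (y, a + q, b + q)"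
proof (intro allI impI)
  fix a b :: "'k \<Rightarrow> nat"
  assume ab: "a \<le> b \<and> \<not> fle (b + p) (pdeg x)"
  then have not_fle_y: "\<not> fle (b + q) (pdeg y)"
    using assms(4-6) by (simp add: fle_add_iff_fle_shift)
  have "a + p \<le> b + p" "a + q \<le> b + q"
    using ab by (simp_all add: add_right_mono)
  moreover have "pval x (fmeet (a + p) (pdeg x)) (fmeet (b + p) (pdeg x))
               = pval y (fmeet (a + q) (pdeg y)) (fmeet (b + q) (pdeg y))"
    using ab assms(4-6) by (simp add: pval_fmeet_add_eq_shift)
  moreover have "(a + p) - fmeet (a + p) (pdeg x) = (a + q) - fmeet (a + q) (pdeg y)"
    using assms(4-6) by (simp add: add_minus_fmeet_add_eq_shift)
  moreover have "(b + p) - (a + p) = (b + q) - (a + q)"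
    by (simp add: fun_eq_iff)
  ultimately show "\<not> fle (b + q) (pdeg y) \<and> psim L (x, a + p, b + p) (y, a + q, b + q)"
    using ab not_fle_y assms(2,3) by (simp add: psim_def P_Lambda_def)
qed

end
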